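(* For every recognizable language $L$, the minimal compact automaton $\mathcal A_c(L)$ is obtained, up to isomorphism, from the minimal deterministic automaton $\mathcal A(L)$ (viewed as a compact automaton with edges labelled by letters) by a finite sequence of elementary reductions.
   Context: A compact automaton $(Q,E,I,T)$ has edges $E\subseteq Q\times A^+\times Q$, initial states $I$ and terminal states $T$. It is deterministic if $|I|=1$ and the labels of the edges leaving any state begin with pairwise distinct letters. It is trim if every state lies on a path from $I$ to $T$. A state is special if it is initial or terminal, or if it has two outgoing edges whose labels begin with distinct letters. Elementary reduction: let $\mathcal A=(Q,i,T)$ be a trim deterministic compact automaton and let $q$ be a non-special state. Then $q$ has a unique outgoing edge $q\xrightarrow{v}r$, with $r\ne q$, and $q\neq i$. The elementary reduction of $\mathcal A$ at $q$ is the compact automaton with states $Q\setminus\{q\}$, initial state $i$, terminal states $T$, and edges: (i) the edges $(p,w,r')$ of $\mathcal A$ with $p,r'\neq q$; (ii) the edges $(p,uv,r)$ for every edge $(p,u,q)$ of $\mathcal A$. $\mathcal A(L)$ is the minimal deterministic automaton of $L$, whose states are the nonempty residuals $u^{-1}L=\{v\mid uv\in L\}$. $\mathcal A_c(L)$ is defined as follows: - its states are the special residuals of $L$, i.e. nonempty residuals $u^{-1}L$ such that $u=1$, or $u\in L$, or $u^{-1}L$ contains two words beginning with different letters; - its initial state is $L$; - its terminal states are the $u^{-1}L$ with $u\in L$; - its edges are the $(u^{-1}L,v,(uv)^{-1}L)$ with $v$ nonempty, where both residuals are special and no factorization $v=v'v''$ with $v',v''$ nonempty has $(uv')^{-1}L$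 special. *)

theory Defs
  imports Main
begin

record ('s, 'a) cauto =
  cstates :: "'s set"
  cedges  :: "('s \<times> 'a list \<times> 's) set"
  cinit   :: "'s set"
  cterm   :: "'s set"

definition wf_cauto :: "('s, 'a) cauto \<Rightarrow> bool" where
  "wf_cauto A \<longleftrightarrow>
     (\<forall>(p, u, q) \<in> cedges A. p \<in> cstates A \<and> q \<in> cstates A \<and> u \<noteq> []) \<and>
     cinit A \<subseteq> cstates A \<and> cterm A \<subseteq> cstates A"

definition deterministic :: "('s, 'a) cauto \<Rightarrow> bool" where
  "deterministic A \<longleftrightarrow> card (cinit A) = 1 \<and>
     (\<forall>e1 \<in> cedges A. \<forall>e2 \<in> cedges A.
        fst e1 = fst e2 \<and> e1 \<noteq> e2 \<longrightarrow> hd (fst (snd e1)) \<noteq> hd (fst (snd e2)))"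

inductive reach :: "('s, 'a) cauto \<Rightarrow> 's \<Rightarrow> 's \<Rightarrow> bool" for A where
  refl: "p \<in> cstates A \<Longrightarrow> reach A p p"
| step: "(p, u, r) \<in> cedges A \<Longrightarrow> reach A r q \<Longrightarrow> reach A p q"

definition trim :: "('s, 'a) cauto \<Rightarrow> bool" where
  "trim A \<longleftrightarrow> (\<forall>q \<in> cstates A. \<exists>i \<in> cinit A. \<exists>t \<in> cterm A. reach A i q \<and> reach A q t)"

definition special_state :: "('s, 'a) cauto \<Rightarrow> 's \<Rightarrow> bool" where
  "special_state A q \<longleftrightarrow> q \<in> cinit A \<or> q \<in> cterm A \<or>
     (\<exists>u r v r'. (q, u, r) \<in> cedges A \<and> (q, v, r') \<in> cedges A \<and> hd u \<noteq> hd v)"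

definition elem_red_at :: "('s, 'a) cauto \<Rightarrow> 's \<Rightarrow> ('s, 'a) cauto \<Rightarrow> bool" where
  "elem_red_at A q B \<longleftrightarrow>
     wf_cauto A \<and> trim A \<and> deterministic A \<and> q \<in> cstates A \<and> \<not> special_state A q \<and>
     (\<exists>v r. (q, v, r) \<in> cedges A \<and>
        B = \<lparr> cstates = cstates A - {q},
              cedges = {(p, w, r'). (p, w, r') \<in> cedges A \<and> p \<noteq> q \<and> r' \<noteq> q}
                       \<union> {(p, u @ v, r) | p u. (p, u, q) \<in> cedges A},
              cinit = cinit A,
              cterm = cterm A \<rparr>)"

definition elem_red :: "('s, 'a) cauto \<Rightarrow> ('s, 'a) cauto \<Rightarrow> bool" where
  "elem_red A B \<longleftrightarrow> (\<exists>q. elem_red_at A q B)"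

definition cauto_iso :: "('s, 'a) cauto \<Rightarrow> ('t, 'a) cauto \<Rightarrow> bool" where
  "cauto_iso A B \<longleftrightarrow> (\<exists>f. bij_betw f (cstates A) (cstates B) \<and>
      f ` cinit A = cinit B \<and> f ` cterm A = cterm B \<and>
      cedges B = (\<lambda>(p, u, q). (f p, u, f q)) ` cedges A)"

definition resid :: "'a list set \<Rightarrow> 'a list \<Rightarrow> 'a list set" where
  "resid L u = {v. u @ v \<in> L}"

definition recognizable :: "'a list set \<Rightarrow> bool" where
  "recognizable L \<longleftrightarrow> (\<exists>(Q :: nat set) (\<delta> :: nat \<Rightarrow> 'a \<Rightarrow> nat) q0 F.
     finite Q \<and> q0 \<in> Q \<and> (\<forall>q \<in> Q. \<forall>a. \<delta> q a \<in> Q) \<and> F \<subseteq> Q \<and>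
     L = {w. foldl \<delta> q0 w \<in> F})"

definition minA :: "'a list set \<Rightarrow> ('a list set, 'a) cauto" where
  "minA L = \<lparr> cstates = {resid L u | u. resid L u \<noteq> {}},
             cedges = {(resid L u, [a], resid L (u @ [a])) | u a. resid L (u @ [a]) \<noteq> {}},
             cinit = {X. X = L \<and> L \<noteq> {}},
             cterm = {resid L u | u. u \<in> L} \<rparr>"

definition special_resid :: "'a list set \<Rightarrow> 'a list set \<Rightarrow> bool" where
  "special_resid L X \<longleftrightarrow> (\<exists>u. X = resid L u \<and> X \<noteq> {} \<and>
     (u = [] \<or> u \<in> L \<or> (\<exists>a b x y. a \<noteq> b \<and> a # x \<in> X \<and> b # y \<in> X)))"

definition minAc :: "'a list set \<Rightarrow> ('a list set, 'a) cauto" where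
  "minAc L = \<lparr> cstates = {X. special_resid L X},
              cedges = {(resid L u, v, resid L (u @ v)) | u v. v \<noteq> [] \<and>
                           special_resid L (resid L u) \<and> special_resid L (resid L (u @ v)) \<and>
                           (\<forall>v' v''. v = v' @ v'' \<and> v' \<noteq> [] \<and> v'' \<noteq> [] \<longrightarrow>
                               \<not> special_resid L (resid L (u @ v')))},
              cinit = {X. X = L \<and> L \<noteq> {}},
              cterm = {resid L u | u. u \<in> L} \<rparr>"

end

theory Submission
  imports Defs "HOL-Library.Sublist"
begin

text \<open>For a set \<open>S\<close> of nonempty residuals of \<open>L\<close> containing all special ones, let \<open>A\<^sub>S\<close> be the
  compact automaton with states \<open>S\<close> whose edges \<open>(X, v, v\<^sup>-\<^sup>1X)\<close> are labelled by the words \<open>v\<close>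
  all of whose proper nonempty prefixes lead outside \<open>S\<close>. Taking for \<open>S\<close> all nonempty residuals
  gives \<open>\<A>(L)\<close>, taking the special residuals gives \<open>\<A>\<^sub>c(L)\<close>. Every \<open>A\<^sub>S\<close> is trim and
  deterministic, because a residual from which two different letters can be read is special. A
  residual \<open>q \<in> S\<close> that is not special is a non-special state of \<open>A\<^sub>S\<close>; its unique outgoing edge
  is not a loop since \<open>q\<close> contains a word, and deleting \<open>q\<close> from \<open>S\<close> concatenates the edges
  through \<open>q\<close>, which is precisely the elementary reduction at \<open>q\<close>. As \<open>L\<close> has finitely many
  residuals, deleting the non-special ones one at a time leads from \<open>\<A>(L)\<close> to \<open>\<A>\<^sub>c(L)\<close>.\<close>

definition nonempty_resids :: "'a list set \<Rightarrow> 'a list set set" where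
  "nonempty_resids L = {X. \<exists>u. X = resid L u \<and> X \<noteq> {}}"

definition special_resids :: "'a list set \<Rightarrow> 'a list set set" where
  "special_resids L = {X. special_resid L X}"

definition compact_edges :: "'a list set set \<Rightarrow> ('a list set \<times> 'a list \<times> 'a list set) set" where
  "compact_edges S = {(X, v, resid X v) | X v. X \<in> S \<and> v \<noteq> [] \<and> resid X v \<in> S \<and>
     (\<forall>v' v''. v = v' @ v'' \<and> v' \<noteq> [] \<and> v'' \<noteq> [] \<longrightarrow> resid X v' \<notin> S)}"

definition resid_cauto :: "'a list set \<Rightarrow> 'a list set set \<Rightarrow> ('a list set, 'a) cauto" where
  "resid_cauto L S = \<lparr> cstates = S, cedges = compact_edges S, cinit = {X. X = L \<and> L \<noteq> {}},
     cterm = {resid L u | u. u \<in> L} \<rparr>"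

subsection \<open>Residuals\<close>

lemma resid_append: "resid L (u @ v) = resid (resid L u) v"
  by (simp add: resid_def)

lemma resid_Nil [simp]: "resid L [] = L"
  by (simp add: resid_def)

lemma mem_resid: "w \<in> resid X v \<longleftrightarrow> v @ w \<in> X"
  by (simp add: resid_def)

lemma special_residI:
  assumes "X = resid L u" "X \<noteq> {}"
    and "X = L \<or> [] \<in> X \<or> (\<exists>a b x y. a \<noteq> b \<and> a # x \<in> X \<and> b # y \<in> X)"
  shows "special_resid L X"
  using assms unfolding special_resid_def by (metis append_Nil2 mem_resid resid_Nil)

lemma special_resids_subset_nonempty_resids: "special_resids L \<subseteq> nonempty_resids L"
  by (auto simp: special_resids_def special_resid_def nonempty_resids_def)

lemma nonspecial_resid_first_letter_unique:
  assumes "q \<in> nonempty_resids L" "q \<notin> special_resids L"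
  shows "q \<noteq> L" "[] \<notin> q" "a # x \<in> q \<Longrightarrow> b # y \<in> q \<Longrightarrow> a = b"
  using assms special_residI
  by (auto simp: nonempty_resids_def special_resids_def, blast+)

lemma finite_nonempty_resids:
  assumes "recognizable L"
  shows "finite (nonempty_resids L)"
proof -
  obtain Q :: "nat set" and \<delta> q0 F where Q: "finite Q" "q0 \<in> Q" "\<forall>q \<in> Q. \<forall>a. \<delta> q a \<in> Q"
    and L: "L = {w. foldl \<delta> q0 w \<in> F}"
    using assms unfolding recognizable_def by blast
  have closed: "foldl \<delta> q u \<in> Q" if "q \<in> Q" for q u
    using that by (induction u arbitrary: q) (use Q(3) in auto)
  have "resid L u = {w. foldl \<delta> (foldl \<delta> q0 u) w \<in> F}" for u
    by (simp add: L resid_def)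
  then have "nonempty_resids L \<subseteq> (\<lambda>q. {w. foldl \<delta> q w \<in> F}) ` Q"
    using closed[OF Q(2)] by (auto simp: nonempty_resids_def)
  then show ?thesis using Q(1) finite_subset by blast
qed

subsection \<open>Compact edges between residuals\<close>

lemma ex_shortest_prefix:
  assumes "w \<noteq> []" "P w"
  shows "\<exists>v w'. w = v @ w' \<and> v \<noteq> [] \<and> P v \<and>
           (\<forall>v' v''. v = v' @ v'' \<and> v' \<noteq> [] \<and> v'' \<noteq> [] \<longrightarrow> \<not> P v')"
  using assms
proof (induction "length w" arbitrary: w rule: less_induct)
  case less
  show ?case
  proof (cases "\<exists>v' v''. w = v' @ v'' \<and> v' \<noteq> [] \<and> v'' \<noteq> [] \<and> P v'")
    case True
    then obtain v' v'' where w: "w = v' @ v''" "v' \<noteq> []" "v'' \<noteq> []" "P v'" by blast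
    with less(1)[of v'] obtain v w1 where "v' = v @ w1" "v \<noteq> []" "P v"
      "\<forall>v1 v2. v = v1 @ v2 \<and> v1 \<noteq> [] \<and> v2 \<noteq> [] \<longrightarrow> \<not> P v1" by auto
    with w show ?thesis by (intro exI[of _ v] exI[of _ "w1 @ v''"]) auto
  next
    case False
    with less show ?thesis by (intro exI[of _ w] exI[of _ "[]"]) auto
  qed
qed

lemma compact_edgesD:
  assumes "(X, v, Y) \<in> compact_edges S"
  shows "X \<in> S" "v \<noteq> []" "Y = resid X v" "Y \<in> S"
    and "v = v' @ v'' \<Longrightarrow> v' \<noteq> [] \<Longrightarrow> v'' \<noteq> [] \<Longrightarrow> resid X v' \<notin> S"
  using assms by (auto simp: compact_edges_def)

lemma compact_edgesI:
  assumes "X \<in> S" "v \<noteq> []" "resid X v \<in> S"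
    and "\<And>v' v''. v = v' @ v'' \<Longrightarrow> v' \<noteq> [] \<Longrightarrow> v'' \<noteq> [] \<Longrightarrow> resid X v' \<notin> S"
  shows "(X, v, resid X v) \<in> compact_edges S"
  using assms unfolding compact_edges_def by blast

lemma compact_edge_along_prefix:
  assumes "X \<in> S" "w \<noteq> []" "resid X w \<in> S"
  obtains v w' where "w = v @ w'" "(X, v, resid X v) \<in> compact_edges S"
proof -
  from ex_shortest_prefix[of w "\<lambda>v. resid X v \<in> S"] assms obtain v w' where
    "w = v @ w'" "v \<noteq> []" "resid X v \<in> S"
    "\<forall>v' v''. v = v' @ v'' \<and> v' \<noteq> [] \<and> v'' \<noteq> [] \<longrightarrow> resid X v' \<notin> S" by blast
  with assms(1) that show ?thesis by (blast intro: compact_edgesI)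
qed

lemma compact_edge_first_letter:
  assumes "(X, v, Y) \<in> compact_edges S" "S \<subseteq> nonempty_resids L"
  shows "\<exists>x. hd v # x \<in> X"
proof -
  have "Y \<noteq> {}" using compact_edgesD(4)[OF assms(1)] assms(2) by (auto simp: nonempty_resids_def)
  then obtain z where "v @ z \<in> X" using compact_edgesD(3)[OF assms(1)] by (auto simp: mem_resid)
  with compact_edgesD(2)[OF assms(1)] show ?thesis by (cases v) auto
qed

lemma compact_edge_prefix_eq:
  assumes "(X, v1, Y1) \<in> compact_edges S" "(X, v2, Y2) \<in> compact_edges S" "prefix v1 v2"
  shows "v1 = v2"
proof (rule ccontr)
  assume "v1 \<noteq> v2"
  with assms(3) obtain t where "v2 = v1 @ t" "t \<noteq> []" by (auto simp: prefix_def)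
  with compact_edgesD[OF assms(1)] compact_edgesD(5)[OF assms(2)] show False by auto
qed

text \<open>Two edges leaving \<open>X\<close> with the same first letter would diverge at a residual from which two
  different letters can be read; such a residual is special, hence a state, contradicting the
  minimality of the labels.\<close>

lemma compact_edges_deterministic:
  assumes S: "special_resids L \<subseteq> S" "S \<subseteq> nonempty_resids L"
    and e1: "(X, v1, Y1) \<in> compact_edges S" and e2: "(X, v2, Y2) \<in> compact_edges S"
    and same_hd: "hd v1 = hd v2"
  shows "v1 = v2 \<and> Y1 = Y2"
proof -
  have "v1 = v2"
  proof (cases v1 v2 rule: prefix_cases)
    case 1
    with e1 e2 show ?thesis by (rule compact_edge_prefix_eq)
  next
    case 2
    with e2 e1 show ?thesis by (metis compact_edge_prefix_eq strict_prefix_def)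
  next
    case 3
    then obtain as b bs c cs where d: "b \<noteq> c" "v1 = as @ b # bs" "v2 = as @ c # cs"
      using parallel_decomp by blast
    with same_hd have as: "as \<noteq> []" by auto
    obtain u where X: "X = resid L u"
      using compact_edgesD(1)[OF e1] S(2) by (auto simp: nonempty_resids_def)
    have "resid X v \<noteq> {}" if "(X, v, Y) \<in> compact_edges S" for v Y
      using compact_edgesD(3,4)[OF that] S(2) by (auto simp: nonempty_resids_def)
    then obtain z1 z2 where "v1 @ z1 \<in> X" "v2 @ z2 \<in> X"
      using e1 e2 by (metis ex_in_conv mem_resid)
    with d have "b # bs @ z1 \<in> resid X as" "c # cs @ z2 \<in> resid X as"
      by (auto simp: mem_resid)
    with d(1) have "special_resid L (resid X as)"
      by (intro special_residI[of _ _ "u @ as"]) (auto simp: X resid_append)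
    with S(1) compact_edgesD(5)[OF e1 d(2) as] show ?thesis by (auto simp: special_resids_def)
  qed
  with compact_edgesD(3)[OF e1] compact_edgesD(3)[OF e2] show ?thesis by simp
qed

lemma compact_edge_merge:
  assumes e1: "(p, u, q) \<in> compact_edges S" and e2: "(q, v, r) \<in> compact_edges S"
    and "p \<noteq> q" "r \<noteq> q"
  shows "(p, u @ v, r) \<in> compact_edges (S - {q})"
proof -
  note d1 = compact_edgesD[OF e1] and d2 = compact_edgesD[OF e2]
  have r: "resid p (u @ v) = r" using d1(3) d2(3) by (simp add: resid_append)
  have "(p, u @ v, resid p (u @ v)) \<in> compact_edges (S - {q})"
  proof (rule compact_edgesI)
    fix v' v'' assume split: "u @ v = v' @ v''" "v' \<noteq> []" "v'' \<noteq> []"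
    then obtain us where "u = v' @ us \<and> us @ v = v'' \<or> u @ us = v' \<and> v = us @ v''"
      by (auto simp: append_eq_append_conv2)
    then show "resid p v' \<notin> S - {q}"
    proof (elim disjE conjE)
      assume "u = v' @ us"
      then show ?thesis using d1(3,5) split(2) by (cases "us = []") auto
    next
      assume "u @ us = v'" "v = us @ v''"
      then show ?thesis using d1(3) d2(5) split(3) by (cases "us = []") (auto simp: resid_append)
    qed
  qed (use d1 d2 r assms(3,4) in auto)
  with r show ?thesis by simp
qed

lemma compact_edge_remove_state_cases:
  assumes e: "(p, w, r') \<in> compact_edges (S - {q})"
    and q: "q \<in> S" "(q, v, r) \<in> compact_edges S" "r \<noteq> q"
    and unique: "\<And>v' r'. (q, v', r') \<in> compact_edges S \<Longrightarrow> v' = v \<and> r' = r"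
  shows "(p, w, r') \<in> compact_edges S \<and> p \<noteq> q \<and> r' \<noteq> q \<or>
         (\<exists>u. w = u @ v \<and> r' = r \<and> (p, u, q) \<in> compact_edges S)"
proof -
  note d = compact_edgesD[OF e]
  have "p \<in> S" "resid p w \<in> S" using d(1,3,4) by auto
  then obtain v0 w' where w: "w = v0 @ w'" and e0: "(p, v0, resid p v0) \<in> compact_edges S"
    using d(2) by (blast elim: compact_edge_along_prefix)
  show ?thesis
  proof (cases "w' = []")
    case True
    with w e0 d show ?thesis by auto
  next
    case False
    with d(5)[OF w] compact_edgesD(2,4)[OF e0] have pq: "resid p v0 = q" by auto
    with d(3,4) w have "resid q w' \<in> S" by (simp add: resid_append)
    then obtain v1 w'' where w': "w' = v1 @ w''" and "(q, v1, resid q v1) \<in> compact_edges S"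
      using q(1) False by (blast elim: compact_edge_along_prefix)
    with unique have v1: "v1 = v" "resid q v = r" by auto
    have rp: "resid p (v0 @ v) = r" using pq v1(2) by (simp add: resid_append)
    have "w'' = []"
    proof (rule ccontr)
      assume "w'' \<noteq> []"
      with d(5)[of "v0 @ v" w''] w w' v1(1) compact_edgesD(2)[OF e0]
      have "resid p (v0 @ v) \<notin> S - {q}" by auto
      with rp q(3) compact_edgesD(4)[OF q(2)] show False by auto
    qed
    with w w' v1 rp d(3) e0 pq show ?thesis by auto
  qed
qed

lemma compact_edges_remove_state:
  assumes "q \<in> S" "(q, v, r) \<in> compact_edges S" "r \<noteq> q"
    and unique: "\<And>v' r'. (q, v', r') \<in> compact_edges S \<Longrightarrow> v' = v \<and> r' = r"
  shows "compact_edges (S - {q}) =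
           {(p, w, r'). (p, w, r') \<in> compact_edges S \<and> p \<noteq> q \<and> r' \<noteq> q}
           \<union> {(p, u @ v, r) | p u. (p, u, q) \<in> compact_edges S}"
proof (intro equalityI subsetI)
  fix e assume "e \<in> compact_edges (S - {q})"
  then show "e \<in> {(p, w, r'). (p, w, r') \<in> compact_edges S \<and> p \<noteq> q \<and> r' \<noteq> q}
           \<union> {(p, u @ v, r) | p u. (p, u, q) \<in> compact_edges S}"
    using compact_edge_remove_state_cases[OF _ assms] by (cases e) auto
next
  fix e assume "e \<in> {(p, w, r'). (p, w, r') \<in> compact_edges S \<and> p \<noteq> q \<and> r' \<noteq> q}
           \<union> {(p, u @ v, r) | p u. (p, u, q) \<in> compact_edges S}"
  then consider (keep) p w r' where "e = (p, w, r')" "(p, w, r') \<in> compact_edges S" "p \<noteq> q" "r' \<noteq> q"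
    | (merge) p u where "e = (p, u @ v, r)" "(p, u, q) \<in> compact_edges S" by blast
  then show "e \<in> compact_edges (S - {q})"
  proof cases
    case keep
    note d = compact_edgesD[OF keep(2)]
    have "(p, w, resid p w) \<in> compact_edges (S - {q})"
      by (rule compact_edgesI) (use d keep(3,4) in auto)
    with keep(1) d(3) show ?thesis by simp
  next
    case merge
    have "p \<noteq> q" using merge(2) unique assms(3) by blast
    with merge assms(2,3) show ?thesis using compact_edge_merge by blast
  qed
qed

subsection \<open>The automata \<open>A\<^sub>S\<close>\<close>

lemma reach_resid_cauto:
  assumes "X \<in> S" "resid X w \<in> S"
  shows "reach (resid_cauto L S) X (resid X w)"
  using assms
proof (induction "length w" arbitrary: w X rule: less_induct)
  case less
  show ?case
  proof (cases "w = []")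
    case True
    with less.prems show ?thesis by (auto intro: reach.refl simp: resid_cauto_def)
  next
    case False
    with less.prems obtain v w' where w: "w = v @ w'"
      and e: "(X, v, resid X v) \<in> compact_edges S"
      by (blast elim: compact_edge_along_prefix)
    have "reach (resid_cauto L S) (resid X v) (resid (resid X v) w')"
      using less w compact_edgesD(2,4)[OF e] by (simp add: resid_append)
    with e w show ?thesis by (auto intro: reach.step simp: resid_cauto_def resid_append)
  qed
qed

lemma resid_in_states_if_mem:
  assumes "special_resids L \<subseteq> S" "u \<in> L"
  shows "resid L u \<in> S"
proof -
  have "[] \<in> resid L u" using assms(2) by (simp add: mem_resid)
  then have "special_resid L (resid L u)" by (blast intro: special_residI)
  with assms(1) show ?thesis by (auto simp: special_resids_def)
qed

lemma lang_in_states: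
  assumes "special_resids L \<subseteq> S" "L \<noteq> {}"
  shows "L \<in> S"
  using assms special_residI[of L L "[]"] by (auto simp: special_resids_def)

lemma wf_resid_cauto:
  assumes "special_resids L \<subseteq> S"
  shows "wf_cauto (resid_cauto L S)"
  using lang_in_states[OF assms] resid_in_states_if_mem[OF assms]
  by (auto simp: wf_cauto_def resid_cauto_def compact_edges_def mem_resid)

lemma trim_resid_cauto:
  assumes S: "special_resids L \<subseteq> S" "S \<subseteq> nonempty_resids L"
  shows "trim (resid_cauto L S)"
  unfolding trim_def
proof
  fix X assume "X \<in> cstates (resid_cauto L S)"
  then have X: "X \<in> S" by (simp add: resid_cauto_def)
  then obtain u z where Xu: "X = resid L u" and z: "u @ z \<in> L"
    using S(2) by (force simp: nonempty_resids_def mem_resid)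
  have "reach (resid_cauto L S) L X"
    using reach_resid_cauto[of L S u] lang_in_states[OF S(1)] X Xu z by auto
  moreover have "reach (resid_cauto L S) X (resid X z)"
    using reach_resid_cauto[OF X] resid_in_states_if_mem[OF S(1) z] Xu by (simp add: resid_append)
  moreover have "L \<in> cinit (resid_cauto L S)" "resid X z \<in> cterm (resid_cauto L S)"
    using z Xu by (auto simp: resid_cauto_def resid_append[symmetric])
  ultimately show "\<exists>i\<in>cinit (resid_cauto L S). \<exists>t\<in>cterm (resid_cauto L S).
      reach (resid_cauto L S) i X \<and> reach (resid_cauto L S) X t" by blast
qed

lemma deterministic_resid_cauto:
  assumes S: "special_resids L \<subseteq> S" "S \<subseteq> nonempty_resids L" and "L \<noteq> {}"
  shows "deterministic (resid_cauto L S)"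
  unfolding deterministic_def
proof
  show "card (cinit (resid_cauto L S)) = 1"
    using \<open>L \<noteq> {}\<close> by (simp add: resid_cauto_def)
  show "\<forall>e1\<in>cedges (resid_cauto L S). \<forall>e2\<in>cedges (resid_cauto L S).
      fst e1 = fst e2 \<and> e1 \<noteq> e2 \<longrightarrow> hd (fst (snd e1)) \<noteq> hd (fst (snd e2))"
    using compact_edges_deterministic[OF S] by (fastforce simp: resid_cauto_def)
qed

lemma compact_edges_from_nonspecial_unique:
  assumes S: "special_resids L \<subseteq> S" "S \<subseteq> nonempty_resids L" and q: "q \<notin> special_resids L"
    and e1: "(q, v1, r1) \<in> compact_edges S" and e2: "(q, v2, r2) \<in> compact_edges S"
  shows "v1 = v2 \<and> r1 = r2"
proof -
  have "q \<in> nonempty_resids L" using compact_edgesD(1)[OF e1] S(2) by blast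
  then have "hd v1 = hd v2"
    using compact_edge_first_letter[OF e1 S(2)] compact_edge_first_letter[OF e2 S(2)]
      nonspecial_resid_first_letter_unique(3)[OF _ q] by blast
  with compact_edges_deterministic[OF S e1 e2] show ?thesis .
qed

lemma ex_compact_edge_from_nonspecial:
  assumes S: "special_resids L \<subseteq> S" "S \<subseteq> nonempty_resids L"
    and q: "q \<in> S" "q \<notin> special_resids L"
  obtains v where "(q, v, resid q v) \<in> compact_edges S"
proof -
  obtain u w where qu: "q = resid L u" and w: "w \<in> q"
    using q(1) S(2) by (force simp: nonempty_resids_def)
  have "w \<noteq> []" using w nonspecial_resid_first_letter_unique(2) q S(2) by blast
  moreover have "resid q w \<in> S"
    using resid_in_states_if_mem[OF S(1), of "u @ w"] w qu by (simp add: mem_resid resid_append)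
  ultimately show ?thesis using q(1) that by (blast elim: compact_edge_along_prefix)
qed

text \<open>A loop at \<open>q\<close> would be the only edge leaving \<open>q\<close>, so a shortest word of \<open>q\<close> could be
  shortened by its label.\<close>

lemma compact_edge_from_nonspecial_not_loop:
  assumes S: "special_resids L \<subseteq> S" "S \<subseteq> nonempty_resids L" and q: "q \<notin> special_resids L"
  shows "(q, v, q) \<notin> compact_edges S"
proof
  assume loop: "(q, v, q) \<in> compact_edges S"
  have qS: "q \<in> S" using compact_edgesD(1)[OF loop] .
  then obtain u w0 where qu: "q = resid L u" and "w0 \<in> q"
    using S(2) by (force simp: nonempty_resids_def)
  then obtain w where w: "w \<in> q" and shortest: "\<And>w'. w' \<in> q \<Longrightarrow> length w \<le> length w'"
    using ex_has_least_nat[of "\<lambda>w. w \<in> q" w0 length] by blast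
  have "w \<noteq> []" using w nonspecial_resid_first_letter_unique(2) q qS S(2) by blast
  moreover have "resid q w \<in> S"
    using resid_in_states_if_mem[OF S(1), of "u @ w"] w qu by (simp add: mem_resid resid_append)
  ultimately obtain v' w' where w': "w = v' @ w'" and e: "(q, v', resid q v') \<in> compact_edges S"
    using qS by (blast elim: compact_edge_along_prefix)
  with compact_edges_from_nonspecial_unique[OF S q e loop] have "v' = v" "resid q v' = q" by auto
  with w w' have "w' \<in> q" by (metis mem_resid)
  with shortest[of w'] w' compact_edgesD(2)[OF e] show False by simp
qed

lemma not_special_state_resid_cauto:
  assumes S: "special_resids L \<subseteq> S" "S \<subseteq> nonempty_resids L"
    and q: "q \<in> S" "q \<notin> special_resids L"
  shows "\<not> special_state (resid_cauto L S) q"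
proof -
  have q': "q \<in> nonempty_resids L" using q(1) S(2) by blast
  note first_letter = nonspecial_resid_first_letter_unique[OF q' q(2)]
  have "hd v1 = hd v2" if "(q, v1, r1) \<in> compact_edges S" "(q, v2, r2) \<in> compact_edges S"
    for v1 v2 r1 r2
    using compact_edges_from_nonspecial_unique[OF S q(2) that] by simp
  with first_letter(1,2) show ?thesis
    by (auto simp: special_state_def resid_cauto_def mem_resid)
qed

lemma elem_red_at_resid_cauto:
  assumes S: "special_resids L \<subseteq> S" "S \<subseteq> nonempty_resids L"
    and q: "q \<in> S" "q \<notin> special_resids L"
  shows "elem_red_at (resid_cauto L S) q (resid_cauto L (S - {q}))"
proof -
  have "L \<noteq> {}" using q(1) S(2) by (auto simp: nonempty_resids_def resid_def)
  obtain v where e: "(q, v, resid q v) \<in> compact_edges S"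
    using ex_compact_edge_from_nonspecial[OF S q] .
  have "resid q v \<noteq> q"
    using compact_edge_from_nonspecial_not_loop[OF S q(2)] e by metis
  moreover have "v' = v \<and> r' = resid q v" if "(q, v', r') \<in> compact_edges S" for v' r'
    using compact_edges_from_nonspecial_unique[OF S q(2) that e] .
  ultimately have "compact_edges (S - {q}) =
      {(p, w, r'). (p, w, r') \<in> compact_edges S \<and> p \<noteq> q \<and> r' \<noteq> q}
      \<union> {(p, u @ v, resid q v) | p u. (p, u, q) \<in> compact_edges S}"
    by (rule compact_edges_remove_state[OF q(1) e])
  then have "resid_cauto L (S - {q}) = \<lparr> cstates = cstates (resid_cauto L S) - {q},
      cedges = {(p, w, r'). (p, w, r') \<in> cedges (resid_cauto L S) \<and> p \<noteq> q \<and> r' \<noteq> q}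
        \<union> {(p, u @ v, resid q v) | p u. (p, u, q) \<in> cedges (resid_cauto L S)},
      cinit = cinit (resid_cauto L S), cterm = cterm (resid_cauto L S) \<rparr>"
    by (simp add: resid_cauto_def)
  moreover have "(q, v, resid q v) \<in> cedges (resid_cauto L S)" "q \<in> cstates (resid_cauto L S)"
    using e q(1) by (simp_all add: resid_cauto_def)
  ultimately show ?thesis
    unfolding elem_red_at_def
    using wf_resid_cauto[OF S(1)] trim_resid_cauto[OF S] deterministic_resid_cauto[OF S \<open>L \<noteq> {}\<close>]
      not_special_state_resid_cauto[OF S q]
    by blast
qed

lemma elem_red_rtranclp_remove_nonspecial:
  assumes "finite D" "D \<inter> special_resids L = {}" "D \<subseteq> nonempty_resids L"
  shows "elem_red\<^sup>*\<^sup>* (resid_cauto L (special_resids L \<union> D)) (resid_cauto L (special_resids L))"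
  using assms
proof (induction D rule: finite_induct)
  case empty
  show ?case by simp
next
  case (insert q D)
  have "elem_red_at (resid_cauto L (special_resids L \<union> insert q D)) q
      (resid_cauto L (special_resids L \<union> insert q D - {q}))"
    using insert.prems special_resids_subset_nonempty_resids
    by (intro elem_red_at_resid_cauto) auto
  moreover have "special_resids L \<union> insert q D - {q} = special_resids L \<union> D"
    using insert.hyps(2) insert.prems(1) by auto
  ultimately have "elem_red (resid_cauto L (special_resids L \<union> insert q D))
      (resid_cauto L (special_resids L \<union> D))"
    unfolding elem_red_def by auto
  with insert show ?case by (auto intro: converse_rtranclp_into_rtranclp)
qed

subsection \<open>The two extreme cases\<close>

lemma compact_edges_nonempty_resids:
  "compact_edges (nonempty_resids L) =
     {(resid L u, [a], resid L (u @ [a])) | u a. resid L (u @ [a]) \<noteq> {}}"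
proof (intro equalityI subsetI)
  fix e assume e: "e \<in> compact_edges (nonempty_resids L)"
  then obtain X v where ev: "e = (X, v, resid X v)" by (auto simp: compact_edges_def)
  note d = compact_edgesD[OF e[unfolded ev]]
  obtain u where X: "X = resid L u" using d(1) by (auto simp: nonempty_resids_def)
  obtain a t where v: "v = a # t" using d(2) by (cases v) auto
  have ne: "resid X v \<noteq> {}" using d(4) by (auto simp: nonempty_resids_def)
  have "t = []"
  proof (rule ccontr)
    assume "t \<noteq> []"
    moreover have "resid X [a] \<in> nonempty_resids L"
      using ne by (auto simp: nonempty_resids_def X v mem_resid resid_append[symmetric]
          intro!: exI[of _ "u @ [a]"])
    ultimately show False using d(5)[of "[a]" t] v by auto
  qed
  with ev X v ne show "e \<in> {(resid L u, [a], resid L (u @ [a])) | u a. resid L (u @ [a]) \<noteq> {}}"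
    by (auto simp: resid_append)
next
  fix e assume "e \<in> {(resid L u, [a], resid L (u @ [a])) | u a. resid L (u @ [a]) \<noteq> {}}"
  then obtain u a where e: "e = (resid L u, [a], resid L (u @ [a]))"
    and ne: "resid L (u @ [a]) \<noteq> {}" by blast
  have "(resid L u, [a], resid (resid L u) [a]) \<in> compact_edges (nonempty_resids L)"
    using ne by (intro compact_edgesI)
      (auto simp: nonempty_resids_def resid_append[symmetric] Cons_eq_append_conv mem_resid)
  with e show "e \<in> compact_edges (nonempty_resids L)" by (simp add: resid_append)
qed

lemma minA_eq_resid_cauto: "minA L = resid_cauto L (nonempty_resids L)"
proof -
  have "{resid L u | u. resid L u \<noteq> {}} = nonempty_resids L"
    by (auto simp: nonempty_resids_def)
  then show ?thesis by (simp add: minA_def resid_cauto_def compact_edges_nonempty_resids)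
qed

lemma minAc_eq_resid_cauto: "minAc L = resid_cauto L (special_resids L)"
proof -
  have "compact_edges (special_resids L) =
      {(resid L u, v, resid L (u @ v)) | u v. v \<noteq> [] \<and>
         special_resid L (resid L u) \<and> special_resid L (resid L (u @ v)) \<and>
         (\<forall>v' v''. v = v' @ v'' \<and> v' \<noteq> [] \<and> v'' \<noteq> [] \<longrightarrow>
             \<not> special_resid L (resid L (u @ v')))}"
    unfolding compact_edges_def special_resids_def
    by (auto simp: resid_append) (metis special_resid_def)
  then show ?thesis by (simp add: minAc_def resid_cauto_def special_resids_def)
qed

lemma cauto_iso_refl: "cauto_iso A A"
  unfolding cauto_iso_def by (intro exI[of _ id]) auto

theorem mainTheorem13:
  fixes L :: "'a list set"
  assumes "recognizable L"
  shows "\<exists>B. elem_red\<^sup>*\<^sup>* (minA L) B \<and> cauto_iso B (minAc L)"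
proof -
  let ?D = "nonempty_resids L - special_resids L"
  have "finite ?D" using finite_nonempty_resids[OF assms] by simp
  then have "elem_red\<^sup>*\<^sup>* (resid_cauto L (special_resids L \<union> ?D)) (resid_cauto L (special_resids L))"
    by (rule elem_red_rtranclp_remove_nonspecial) auto
  moreover have "special_resids L \<union> ?D = nonempty_resids L"
    using special_resids_subset_nonempty_resids by blast
  ultimately have "elem_red\<^sup>*\<^sup>* (minA L) (minAc L)"
    by (simp add: minA_eq_resid_cauto minAc_eq_resid_cauto)
  then show ?thesis using cauto_iso_refl by blast
qed

end
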